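(* Let $X$ be a countably infinite set and $W=\{0,1\}^X$. There is no binary relation $\succeq$ on $W$ that is a preorder (reflexive and transitive) and simultaneously satisfies Strong Pareto, Permutation Invariance, and Completeness.
   Context: Elements of $W$ ("worlds") are functions $w:X\to\mathbb R$ (here with values in $\{0,1\}$). For a preorder $\succeq$, write $w\succ v$ iff $w\succeq v$ and not $v\succeq w$. For a permutation $\pi$ of $X$ and $w\in W$, define $\pi(w)\in W$ by $\pi(w)(x)=w(\pi(x))$. Strong Pareto: for all $w,v\in W$, if $w(x)\ge v(x)$ for all $x\in X$ and $w(x)>v(x)$ for some $x\in X$, then $w\succ v$. Permutation Invariance: for all $w,v\in W$ and every permutation $\pi$ of $X$, $w\succeq v$ if and only if $\pi(w)\succeq\pi(v)$. Completeness: for all $w,v\in W$, $w\succeq v$ or $v\succeq w$. *)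

theory Defs
  imports Complex_Main "HOL-Library.Countable_Set"
begin

definition worlds01 :: "('x \<Rightarrow> real) set" where
  "worlds01 = {w. \<forall>x. w x \<in> {0, 1}}"

definition strict_of :: "('w \<Rightarrow> 'w \<Rightarrow> bool) \<Rightarrow> 'w \<Rightarrow> 'w \<Rightarrow> bool" where
  "strict_of R w v \<longleftrightarrow> R w v \<and> \<not> R v w"

definition preorder_on :: "'w set \<Rightarrow> ('w \<Rightarrow> 'w \<Rightarrow> bool) \<Rightarrow> bool" where
  "preorder_on W R \<longleftrightarrow> (\<forall>w\<in>W. R w w) \<and>
     (\<forall>u\<in>W. \<forall>v\<in>W. \<forall>w\<in>W. R u v \<longrightarrow> R v w \<longrightarrow> R u w)"

definition strong_pareto :: "('x \<Rightarrow> real) set \<Rightarrow> (('x \<Rightarrow> real) \<Rightarrow> ('x \<Rightarrow> real) \<Rightarrow> bool) \<Rightarrow> bool" where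
  "strong_pareto W R \<longleftrightarrow> (\<forall>w\<in>W. \<forall>v\<in>W.
     (\<forall>x. w x \<ge> v x) \<and> (\<exists>x. w x > v x) \<longrightarrow> strict_of R w v)"

definition permutation_invariance :: "('x \<Rightarrow> real) set \<Rightarrow> (('x \<Rightarrow> real) \<Rightarrow> ('x \<Rightarrow> real) \<Rightarrow> bool) \<Rightarrow> bool" where
  "permutation_invariance W R \<longleftrightarrow> (\<forall>w\<in>W. \<forall>v\<in>W. \<forall>\<pi>::'x \<Rightarrow> 'x. bij \<pi> \<longrightarrow>
     (R w v \<longleftrightarrow> R (w \<circ> \<pi>) (v \<circ> \<pi>)))"

definition completeness :: "'w set \<Rightarrow> ('w \<Rightarrow> 'w \<Rightarrow> bool) \<Rightarrow> bool" where
  "completeness W R \<longleftrightarrow> (\<forall>w\<in>W. \<forall>v\<in>W. R w v \<or> R v w)"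

end

theory Submission
  imports Defs "HOL-Library.Nat_Bijection" "HOL-Library.Indicator_Function"
begin

text \<open>Identify the individuals with \<open>\<int>\<close>. Let \<open>a\<close> be the indicator of the non-negative
even integers and \<open>b\<close> that of the non-negative odd integers. Exchanging \<open>2k\<close> and \<open>2k+1\<close>
swaps \<open>a\<close> and \<open>b\<close>, so by permutation invariance and completeness \<open>a\<close> and \<open>b\<close> are
indifferent. Shifting the odd integers down by two fixes \<open>a\<close> and turns \<open>b\<close> into \<open>b'\<close>,
the indicator of the odd integers \<open>\<ge> 3\<close>; hence \<open>a\<close> and \<open>b'\<close> are indifferent too, and by
transitivity so are \<open>b\<close> and \<open>b'\<close>. But \<open>b\<close> Pareto-dominates \<open>b'\<close>.\<close>

lemma indicator_in_worlds01: "(indicator S :: 'x \<Rightarrow> real) \<in> worlds01"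
  by (simp add: worlds01_def indicator_def)

lemma indicator_comp: "indicator S \<circ> f = indicator (f -` S)"
  by (simp add: fun_eq_iff indicator_vimage)

lemma strict_of_indicator_psubset:
  assumes "strong_pareto worlds01 R" and "S \<subset> T"
  shows "strict_of R (indicator T) (indicator S)"
proof -
  obtain x where "x \<in> T" "x \<notin> S" using \<open>S \<subset> T\<close> by blast
  then have "indicator T x > (indicator S x :: real)" by simp
  moreover have "\<forall>y. indicator T y \<ge> (indicator S y :: real)"
    using \<open>S \<subset> T\<close> by (auto simp: indicator_def)
  ultimately show ?thesis
    using assms(1) indicator_in_worlds01 unfolding strong_pareto_def by blast
qed

lemma indifferent_if_swapped:
  assumes "permutation_invariance W R" "completeness W R"
    and "w \<in> W" "v \<in> W" "bij \<tau>" "w \<circ> \<tau> = v" "v \<circ> \<tau> = w"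
  shows "R w v" "R v w"
proof -
  have "R w v \<longleftrightarrow> R v w"
    using assms(1,3-7) unfolding permutation_invariance_def by metis
  then show "R w v" "R v w"
    using assms(2-4) unfolding completeness_def by auto
qed

lemma permutation_invariance_fixed:
  assumes "permutation_invariance W R" "w \<in> W" "v \<in> W" "bij \<sigma>" "w \<circ> \<sigma> = w"
  shows "R v w \<longleftrightarrow> R (v \<circ> \<sigma>) w"
  using assms unfolding permutation_invariance_def by metis

lemma no_complete_invariant_pareto_preorder:
  fixes A B :: "'x set" and \<tau> \<sigma> :: "'x \<Rightarrow> 'x" and R :: "('x \<Rightarrow> real) \<Rightarrow> ('x \<Rightarrow> real) \<Rightarrow> bool"
  assumes "bij \<tau>" "\<tau> -` A = B" "\<tau> -` B = A"
    and "bij \<sigma>" "\<sigma> -` A = A" "\<sigma> -` B \<subset> B"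
  shows "\<not> (preorder_on worlds01 R \<and> strong_pareto worlds01 R \<and>
            permutation_invariance worlds01 R \<and> completeness worlds01 R)"
proof
  assume "preorder_on worlds01 R \<and> strong_pareto worlds01 R \<and>
          permutation_invariance worlds01 R \<and> completeness worlds01 R"
  then have pre: "preorder_on worlds01 R" and pareto: "strong_pareto worlds01 R"
    and inv: "permutation_invariance worlds01 R" and compl: "completeness worlds01 R"
    by auto
  let ?a = "indicator A :: 'x \<Rightarrow> real" and ?b = "indicator B :: 'x \<Rightarrow> real"
    and ?b' = "indicator (\<sigma> -` B) :: 'x \<Rightarrow> real"
  have "?a \<circ> \<tau> = ?b" "?b \<circ> \<tau> = ?a" "?a \<circ> \<sigma> = ?a" "?b \<circ> \<sigma> = ?b'"
    using assms by (simp_all add: indicator_comp)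
  then have "R ?a ?b" and "R ?b ?a"
    using indifferent_if_swapped[OF inv compl] indicator_in_worlds01 \<open>bij \<tau>\<close> by blast+
  have "R ?b' ?a"
    using permutation_invariance_fixed[OF inv _ _ \<open>bij \<sigma>\<close> \<open>?a \<circ> \<sigma> = ?a\<close>] \<open>R ?b ?a\<close>
      \<open>?b \<circ> \<sigma> = ?b'\<close> indicator_in_worlds01 by metis
  with \<open>R ?a ?b\<close> have "R ?b' ?b"
    using pre indicator_in_worlds01 unfolding preorder_on_def by blast
  then show False
    using strict_of_indicator_psubset[OF pareto assms(6)] unfolding strict_of_def by blast
qed

definition parity_swap :: "int \<Rightarrow> int" where
  "parity_swap n = (if even n then n + 1 else n - 1)"

definition odd_shift :: "int \<Rightarrow> int" where
  "odd_shift n = (if even n then n else n - 2)"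

lemma bij_parity_swap: "bij parity_swap"
  by (rule bij_betw_byWitness[where f' = parity_swap]) (auto simp: parity_swap_def)

lemma bij_odd_shift: "bij odd_shift"
  by (rule bij_betw_byWitness[where f' = "\<lambda>n. if even n then n else n + 2"])
     (auto simp: odd_shift_def image_iff intro: exI[where x = "_ - 2"])

abbreviation nonneg_evens :: "int set" where "nonneg_evens \<equiv> {n. 0 \<le> n \<and> even n}"
abbreviation nonneg_odds :: "int set" where "nonneg_odds \<equiv> {n. 0 \<le> n \<and> odd n}"

lemma vimage_parity_swap_nonneg_evens: "parity_swap -` nonneg_evens = nonneg_odds"
  by (auto simp: parity_swap_def split: if_splits) presburger

lemma vimage_parity_swap_nonneg_odds: "parity_swap -` nonneg_odds = nonneg_evens"
  by (auto simp: parity_swap_def split: if_splits)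

lemma vimage_odd_shift_nonneg_evens: "odd_shift -` nonneg_evens = nonneg_evens"
  by (auto simp: odd_shift_def split: if_splits)

lemma vimage_odd_shift_nonneg_odds: "odd_shift -` nonneg_odds \<subset> nonneg_odds"
proof -
  have "odd_shift -` nonneg_odds \<subseteq> nonneg_odds"
    by (auto simp: odd_shift_def split: if_splits)
  moreover have "(1::int) \<notin> odd_shift -` nonneg_odds"
    by (simp add: odd_shift_def)
  ultimately show ?thesis by auto
qed

lemma vimage_conjugate:
  assumes "bij g"
  shows "(inv g \<circ> f \<circ> g) -` (g -` S) = g -` (f -` S)"
  using assms by (auto simp: bij_is_surj surj_f_inv_f)

lemma vimage_psubset_surj:
  assumes "surj g" "A \<subset> B"
  shows "g -` A \<subset> g -` B"
  using assms surj_image_vimage_eq by (metis psubset_eq vimage_mono)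

lemma bij_conjugate:
  assumes "bij g" "bij f"
  shows "bij (inv g \<circ> f \<circ> g)"
  using assms by (intro bij_comp bij_imp_bij_inv) auto

theorem proposition1:
  assumes "countable (UNIV :: 'x set)" and "infinite (UNIV :: 'x set)"
  shows "\<not> (\<exists>R :: ('x \<Rightarrow> real) \<Rightarrow> ('x \<Rightarrow> real) \<Rightarrow> bool.
            preorder_on worlds01 R \<and> strong_pareto worlds01 R \<and>
            permutation_invariance worlds01 R \<and> completeness worlds01 R)"
proof -
  obtain e :: "'x \<Rightarrow> nat" where "bij e"
    using countableE_infinite[OF assms] by blast
  define g where "g = int_decode \<circ> e"
  have g: "bij g"
    unfolding g_def using \<open>bij e\<close> bij_int_decode by (rule bij_comp)
  have swap_evens: "(inv g \<circ> parity_swap \<circ> g) -` (g -` nonneg_evens) = g -` nonneg_odds"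
    and swap_odds: "(inv g \<circ> parity_swap \<circ> g) -` (g -` nonneg_odds) = g -` nonneg_evens"
    and shift_evens: "(inv g \<circ> odd_shift \<circ> g) -` (g -` nonneg_evens) = g -` nonneg_evens"
    and shift_odds: "(inv g \<circ> odd_shift \<circ> g) -` (g -` nonneg_odds) \<subset> g -` nonneg_odds"
    by (simp_all only: vimage_conjugate[OF g] vimage_parity_swap_nonneg_evens
        vimage_parity_swap_nonneg_odds vimage_odd_shift_nonneg_evens
        vimage_psubset_surj[OF bij_is_surj[OF g] vimage_odd_shift_nonneg_odds])
  show ?thesis
    using no_complete_invariant_pareto_preorder[OF bij_conjugate[OF g bij_parity_swap]
        swap_evens swap_odds bij_conjugate[OF g bij_odd_shift] shift_evens shift_odds]
    by blast
qed

end
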